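(* Let $M=(\mathcal{C},\mathcal{Q},p,q_0,q_f)$ be a nondeterministic finite-state automaton over a category. Then $\mathcal{W}(M)=(\mathcal{W}(\mathcal{C}),\mathcal{W}(\mathcal{Q}),\mathcal{W}(p),(q_0,q_f))$ is a nondeterministic finite-state automaton over an operad, and the language of constants it recognizes equals the language of arrows recognized by $M$ (identifying constants of $\mathcal{W}(\mathcal{C})$ of color $(A,B)$ with arrows $A\to B$ of $\mathcal{C}$).
   Context: Composition in categories is written diagrammatically. A functor of categories $p$ is ULF if for every arrow $\alpha$ and arrows $u,v$ with $p(\alpha)=uv$ there is a unique pair $\beta,\gamma$ with $\alpha=\beta\gamma$, $p(\beta)=u$, $p(\gamma)=v$; a functor of (colored, non-symmetric) operads $p$ is ULF if for every operation $\alpha$ and $g,h,i$ with $p(\alpha)=g\circ_i h$ there is a unique pair $\beta,\gamma$ with $\alpha=\beta\circ_i\gamma$, $p(\beta)=g$, $p(\gamma)=h$. A functor is finitary if its fibers over every object/color and every arrow/operation are finite. A nondeterministic finite-state automaton over a category is a tuple $(\mathcal{C},\mathcal{Q},p,q_0,q_f)$ with $p:\mathcal{Q}\to\mathcal{C}$ finitary ULF and $q_0,q_f$ objects of $\mathcal{Q}$; it recognizes $\{p(\alpha)\mid\alpha:q_0\to q_f\}\subseteq\mathcal{C}(p(q_0),p(q_f))$. A nondeterministic finite-state automaton over an operad is a tuple $(\mathcal{O},\mathcal{Q},p,q_r)$ with $p:\mathcal{Q}\to\mathcal{O}$ a finitary ULF functor of operads and $q_r$ a color of $\mathcal{Q}$;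 it recognizes the set $\{p(\alpha)\mid \alpha \text{ a constant (nullary operation) of } \mathcal{Q} \text{ of color } q_r\}$. The operad of spliced arrows $\mathcal{W}(\mathcal{C})$ has colors pairs $(A,B)$ of objects of $\mathcal{C}$; $n$-ary operations $(A_1,B_1),\dots,(A_n,B_n)\to(A,B)$ are sequences $w_0\text{-}\cdots\text{-}w_n$ with $w_0:A\to A_1$, $w_i:B_i\to A_{i+1}$ ($1\le i<n$), $w_n:B_n\to B$ (for $n=0$ a single arrow $A\to B$); partial composition is $(w_0\text{-}\cdots\text{-}w_n)\circ_i(u_0\text{-}\cdots\text{-}u_m)=w_0\text{-}\cdots\text{-}w_{i-2}\text{-}(w_{i-1}u_0)\text{-}u_1\text{-}\cdots\text{-}u_{m-1}\text{-}(u_mw_i)\text{-}w_{i+1}\text{-}\cdots\text{-}w_n$ with identities $\mathrm{id}_A\text{-}\mathrm{id}_B$; $\mathcal{W}(p)$ applies $p$ componentwise to colors and arrows. *)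

theory Defs
  imports Main
begin

record ('o, 'a) cat =
  Obj  :: "'o set"
  Arr  :: "'a set"
  Dom  :: "'a \<Rightarrow> 'o"
  Cod  :: "'a \<Rightarrow> 'o"
  Idt  :: "'o \<Rightarrow> 'a"
  Comp :: "'a \<Rightarrow> 'a \<Rightarrow> 'a"   \<comment> \<open>Comp f g = fg : first f, then g; needs Cod f = Dom g\<close>

definition category :: "('o, 'a) cat \<Rightarrow> bool" where
  "category C \<longleftrightarrow>
     (\<forall>f\<in>Arr C. Dom C f \<in> Obj C \<and> Cod C f \<in> Obj C) \<and>
     (\<forall>A\<in>Obj C. Idt C A \<in> Arr C \<and> Dom C (Idt C A) = A \<and> Cod C (Idt C A) = A) \<and>
     (\<forall>f\<in>Arr C. \<forall>g\<in>Arr C. Cod C f = Dom C g \<longrightarrow>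
        Comp C f g \<in> Arr C \<and> Dom C (Comp C f g) = Dom C f \<and> Cod C (Comp C f g) = Cod C g) \<and>
     (\<forall>f\<in>Arr C. Comp C (Idt C (Dom C f)) f = f \<and> Comp C f (Idt C (Cod C f)) = f) \<and>
     (\<forall>f\<in>Arr C. \<forall>g\<in>Arr C. \<forall>h\<in>Arr C. Cod C f = Dom C g \<longrightarrow> Cod C g = Dom C h \<longrightarrow>
        Comp C (Comp C f g) h = Comp C f (Comp C g h))"

definition Hom :: "('o, 'a) cat \<Rightarrow> 'o \<Rightarrow> 'o \<Rightarrow> 'a set" where
  "Hom C A B = {f \<in> Arr C. Dom C f = A \<and> Cod C f = B}"

definition cat_functor ::
  "('o, 'a) cat \<Rightarrow> ('p, 'b) cat \<Rightarrow> ('o \<Rightarrow> 'p) \<Rightarrow> ('a \<Rightarrow> 'b) \<Rightarrow> bool" where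
  "cat_functor C D Fo Fa \<longleftrightarrow> category C \<and> category D \<and>
     (\<forall>A\<in>Obj C. Fo A \<in> Obj D) \<and> (\<forall>f\<in>Arr C. Fa f \<in> Arr D) \<and>
     (\<forall>f\<in>Arr C. Dom D (Fa f) = Fo (Dom C f) \<and> Cod D (Fa f) = Fo (Cod C f)) \<and>
     (\<forall>A\<in>Obj C. Fa (Idt C A) = Idt D (Fo A)) \<and>
     (\<forall>f\<in>Arr C. \<forall>g\<in>Arr C. Cod C f = Dom C g \<longrightarrow> Fa (Comp C f g) = Comp D (Fa f) (Fa g))"

definition cat_ulf ::
  "('s, 'b) cat \<Rightarrow> ('o, 'a) cat \<Rightarrow> ('s \<Rightarrow> 'o) \<Rightarrow> ('b \<Rightarrow> 'a) \<Rightarrow> bool" where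
  "cat_ulf Q C po pa \<longleftrightarrow>
     (\<forall>\<alpha>\<in>Arr Q. \<forall>u\<in>Arr C. \<forall>v\<in>Arr C. Cod C u = Dom C v \<longrightarrow> pa \<alpha> = Comp C u v \<longrightarrow>
        (\<exists>!(\<beta>, \<gamma>). \<beta> \<in> Arr Q \<and> \<gamma> \<in> Arr Q \<and> Cod Q \<beta> = Dom Q \<gamma> \<and>
                   \<alpha> = Comp Q \<beta> \<gamma> \<and> pa \<beta> = u \<and> pa \<gamma> = v))"

definition cat_finitary ::
  "('s, 'b) cat \<Rightarrow> ('o, 'a) cat \<Rightarrow> ('s \<Rightarrow> 'o) \<Rightarrow> ('b \<Rightarrow> 'a) \<Rightarrow> bool" where
  "cat_finitary Q C po pa \<longleftrightarrow>
     (\<forall>A\<in>Obj C. finite {q \<in> Obj Q. po q = A}) \<and>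
     (\<forall>f\<in>Arr C. finite {\<alpha> \<in> Arr Q. pa \<alpha> = f})"

definition nfa_cat ::
  "('o, 'a) cat \<Rightarrow> ('s, 'b) cat \<Rightarrow> ('s \<Rightarrow> 'o) \<Rightarrow> ('b \<Rightarrow> 'a) \<Rightarrow> 's \<Rightarrow> 's \<Rightarrow> bool" where
  "nfa_cat C Q po pa q0 qf \<longleftrightarrow>
     cat_functor Q C po pa \<and> cat_ulf Q C po pa \<and> cat_finitary Q C po pa \<and>
     q0 \<in> Obj Q \<and> qf \<in> Obj Q"

definition nfa_cat_lang ::
  "('o, 'a) cat \<Rightarrow> ('s, 'b) cat \<Rightarrow> ('s \<Rightarrow> 'o) \<Rightarrow> ('b \<Rightarrow> 'a) \<Rightarrow> 's \<Rightarrow> 's \<Rightarrow> 'a set" where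
  "nfa_cat_lang C Q po pa q0 qf = pa ` Hom Q q0 qf"

text \<open>Partial composition OComp g i h = g \<circ>_i h, with 1-based index i, 1 \<le> i \<le> arity g,
  defined when Out h = i-th input color of g.\<close>
record ('c, 'p) operad =
  Col   :: "'c set"
  Ops   :: "'p set"
  Ins   :: "'p \<Rightarrow> 'c list"
  Out   :: "'p \<Rightarrow> 'c"
  OId   :: "'c \<Rightarrow> 'p"
  OComp :: "'p \<Rightarrow> nat \<Rightarrow> 'p \<Rightarrow> 'p"

abbreviation arity :: "('c, 'p) operad \<Rightarrow> 'p \<Rightarrow> nat" where
  "arity Op g \<equiv> length (Ins Op g)"

definition composable :: "('c, 'p) operad \<Rightarrow> 'p \<Rightarrow> nat \<Rightarrow> 'p \<Rightarrow> bool" where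
  "composable Op g i h \<longleftrightarrow> g \<in> Ops Op \<and> h \<in> Ops Op \<and> 1 \<le> i \<and> i \<le> arity Op g \<and>
     Out Op h = Ins Op g ! (i - 1)"

definition is_operad :: "('c, 'p) operad \<Rightarrow> bool" where
  "is_operad Op \<longleftrightarrow>
     (\<forall>g\<in>Ops Op. set (Ins Op g) \<subseteq> Col Op \<and> Out Op g \<in> Col Op) \<and>
     (\<forall>c\<in>Col Op. OId Op c \<in> Ops Op \<and> Ins Op (OId Op c) = [c] \<and> Out Op (OId Op c) = c) \<and>
     (\<forall>g h i. composable Op g i h \<longrightarrow>
        OComp Op g i h \<in> Ops Op \<and>
        Ins Op (OComp Op g i h) = take (i - 1) (Ins Op g) @ Ins Op h @ drop i (Ins Op g) \<and>
        Out Op (OComp Op g i h) = Out Op g) \<and>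
     (\<forall>g\<in>Ops Op. OComp Op (OId Op (Out Op g)) 1 g = g) \<and>
     (\<forall>g\<in>Ops Op. \<forall>i. 1 \<le> i \<and> i \<le> arity Op g \<longrightarrow> OComp Op g i (OId Op (Ins Op g ! (i - 1))) = g) \<and>
     \<comment> \<open>sequential associativity\<close>
     (\<forall>f g h i j. composable Op f i g \<longrightarrow> composable Op g j h \<longrightarrow>
        OComp Op (OComp Op f i g) (i - 1 + j) h = OComp Op f i (OComp Op g j h)) \<and>
     \<comment> \<open>parallel associativity\<close>
     (\<forall>f g h i k. composable Op f i g \<longrightarrow> composable Op f k h \<longrightarrow> i < k \<longrightarrow>
        OComp Op (OComp Op f i g) (k - 1 + arity Op g) h = OComp Op (OComp Op f k h) i g)"

definition operad_functor ::
  "('c, 'p) operad \<Rightarrow> ('d, 'q) operad \<Rightarrow> ('c \<Rightarrow> 'd) \<Rightarrow> ('p \<Rightarrow> 'q) \<Rightarrow> bool" where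
  "operad_functor Op P Fc Fp \<longleftrightarrow> is_operad Op \<and> is_operad P \<and>
     (\<forall>c\<in>Col Op. Fc c \<in> Col P) \<and> (\<forall>g\<in>Ops Op. Fp g \<in> Ops P) \<and>
     (\<forall>g\<in>Ops Op. Ins P (Fp g) = map Fc (Ins Op g) \<and> Out P (Fp g) = Fc (Out Op g)) \<and>
     (\<forall>c\<in>Col Op. Fp (OId Op c) = OId P (Fc c)) \<and>
     (\<forall>g h i. composable Op g i h \<longrightarrow> Fp (OComp Op g i h) = OComp P (Fp g) i (Fp h))"

definition operad_ulf ::
  "('s, 'b) operad \<Rightarrow> ('c, 'p) operad \<Rightarrow> ('s \<Rightarrow> 'c) \<Rightarrow> ('b \<Rightarrow> 'p) \<Rightarrow> bool" where
  "operad_ulf Q Op pc pp \<longleftrightarrow>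
     (\<forall>\<alpha>\<in>Ops Q. \<forall>g h i. composable Op g i h \<longrightarrow> pp \<alpha> = OComp Op g i h \<longrightarrow>
        (\<exists>!(\<beta>, \<gamma>). composable Q \<beta> i \<gamma> \<and> \<alpha> = OComp Q \<beta> i \<gamma> \<and> pp \<beta> = g \<and> pp \<gamma> = h))"

definition operad_finitary ::
  "('s, 'b) operad \<Rightarrow> ('c, 'p) operad \<Rightarrow> ('s \<Rightarrow> 'c) \<Rightarrow> ('b \<Rightarrow> 'p) \<Rightarrow> bool" where
  "operad_finitary Q Op pc pp \<longleftrightarrow>
     (\<forall>c\<in>Col Op. finite {q \<in> Col Q. pc q = c}) \<and>
     (\<forall>g\<in>Ops Op. finite {\<alpha> \<in> Ops Q. pp \<alpha> = g})"

definition nfa_op ::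
  "('c, 'p) operad \<Rightarrow> ('s, 'b) operad \<Rightarrow> ('s \<Rightarrow> 'c) \<Rightarrow> ('b \<Rightarrow> 'p) \<Rightarrow> 's \<Rightarrow> bool" where
  "nfa_op Op Q pc pp qr \<longleftrightarrow>
     operad_functor Q Op pc pp \<and> operad_ulf Q Op pc pp \<and> operad_finitary Q Op pc pp \<and>
     qr \<in> Col Q"

definition nfa_op_lang ::
  "('c, 'p) operad \<Rightarrow> ('s, 'b) operad \<Rightarrow> ('s \<Rightarrow> 'c) \<Rightarrow> ('b \<Rightarrow> 'p) \<Rightarrow> 's \<Rightarrow> 'p set" where
  "nfa_op_lang Op Q pc pp qr = pp ` {\<alpha> \<in> Ops Q. Ins Q \<alpha> = [] \<and> Out Q \<alpha> = qr}"

text \<open>An n-ary operation w0-...-wn is the list [w0,...,wn] of length n+1.\<close>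
definition W_comp :: "('o, 'a) cat \<Rightarrow> 'a list \<Rightarrow> nat \<Rightarrow> 'a list \<Rightarrow> 'a list" where
  "W_comp C ws i us =
     (if length us = 1 then
        take (i - 1) ws @ [Comp C (Comp C (ws ! (i - 1)) (hd us)) (ws ! i)] @ drop (i + 1) ws
      else
        take (i - 1) ws @ [Comp C (ws ! (i - 1)) (hd us)] @ butlast (tl us) @
          [Comp C (last us) (ws ! i)] @ drop (i + 1) ws)"

definition W :: "('o, 'a) cat \<Rightarrow> ('o \<times> 'o, 'a list) operad" where
  "W C = \<lparr> Col = Obj C \<times> Obj C,
           Ops = {ws. ws \<noteq> [] \<and> set ws \<subseteq> Arr C},
           Ins = (\<lambda>ws. map (\<lambda>k. (Cod C (ws ! (k - 1)), Dom C (ws ! k))) [1..<length ws]),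
           Out = (\<lambda>ws. (Dom C (hd ws), Cod C (last ws))),
           OId = (\<lambda>(A, B). [Idt C A, Idt C B]),
           OComp = W_comp C \<rparr>"

definition W_col_map :: "('s \<Rightarrow> 'o) \<Rightarrow> ('s \<times> 's \<Rightarrow> 'o \<times> 'o)" where
  "W_col_map po = map_prod po po"

definition W_op_map :: "('b \<Rightarrow> 'a) \<Rightarrow> ('b list \<Rightarrow> 'a list)" where
  "W_op_map pa = map pa"

end

theory Submission
  imports Defs
begin

(* An operation w0-...-wn of W(C) is a nonempty list of arrows, and the partial composition
   g o_i h cuts g after its i-th arrow, g = T @ D, and glues h in between, composing the arrows
   that meet at the two seams: g o_i h = glue (glue T h) D.  All operad laws therefore reduce to
   associativity of gluing at a single seam, which is associativity in C; W(p) acts by map and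
   preserves gluing because p is a functor.  The ULF property of W(p) is obtained by lifting the
   two seams one after the other along p, and a lift of w0-...-wn has its n+1 entries in the
   finite fibres of p over the wi.  Finally the constants of W(Q) of colour (q0, qf) are exactly
   the one-element lists [a] with a : q0 -> qf. *)

lemma
  assumes "category C"
  shows category_Dom_in_Obj: "f \<in> Arr C \<Longrightarrow> Dom C f \<in> Obj C"
    and category_Cod_in_Obj: "f \<in> Arr C \<Longrightarrow> Cod C f \<in> Obj C"
    and category_Idt_in_Arr: "A \<in> Obj C \<Longrightarrow> Idt C A \<in> Arr C"
    and category_Dom_Idt: "A \<in> Obj C \<Longrightarrow> Dom C (Idt C A) = A"
    and category_Cod_Idt: "A \<in> Obj C \<Longrightarrow> Cod C (Idt C A) = A"
    and category_Comp_in_Arr: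
      "\<lbrakk>f \<in> Arr C; g \<in> Arr C; Cod C f = Dom C g\<rbrakk> \<Longrightarrow> Comp C f g \<in> Arr C"
    and category_Dom_Comp:
      "\<lbrakk>f \<in> Arr C; g \<in> Arr C; Cod C f = Dom C g\<rbrakk> \<Longrightarrow> Dom C (Comp C f g) = Dom C f"
    and category_Cod_Comp:
      "\<lbrakk>f \<in> Arr C; g \<in> Arr C; Cod C f = Dom C g\<rbrakk> \<Longrightarrow> Cod C (Comp C f g) = Cod C g"
    and category_Idt_Comp: "f \<in> Arr C \<Longrightarrow> Comp C (Idt C (Dom C f)) f = f"
    and category_Comp_Idt: "f \<in> Arr C \<Longrightarrow> Comp C f (Idt C (Cod C f)) = f"
    and category_Comp_assoc:
      "\<lbrakk>f \<in> Arr C; g \<in> Arr C; h \<in> Arr C; Cod C f = Dom C g; Cod C g = Dom C h\<rbrakk>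
        \<Longrightarrow> Comp C (Comp C f g) h = Comp C f (Comp C g h)"
  using assms unfolding category_def by blast+

lemma
  assumes "cat_functor Q C po pa"
  shows cat_functor_dom_category: "category Q"
    and cat_functor_cod_category: "category C"
    and cat_functor_Obj: "A \<in> Obj Q \<Longrightarrow> po A \<in> Obj C"
    and cat_functor_Arr: "f \<in> Arr Q \<Longrightarrow> pa f \<in> Arr C"
    and cat_functor_Dom: "f \<in> Arr Q \<Longrightarrow> Dom C (pa f) = po (Dom Q f)"
    and cat_functor_Cod: "f \<in> Arr Q \<Longrightarrow> Cod C (pa f) = po (Cod Q f)"
    and cat_functor_Idt: "A \<in> Obj Q \<Longrightarrow> pa (Idt Q A) = Idt C (po A)"
    and cat_functor_Comp:
      "\<lbrakk>f \<in> Arr Q; g \<in> Arr Q; Cod Q f = Dom Q g\<rbrakk> \<Longrightarrow> pa (Comp Q f g) = Comp C (pa f) (pa g)"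
  using assms unfolding cat_functor_def by blast+

section \<open>Gluing lists of arrows\<close>

definition arr_list :: "('o, 'a) cat \<Rightarrow> 'a list \<Rightarrow> bool" where
  "arr_list C ws \<longleftrightarrow> ws \<noteq> [] \<and> set ws \<subseteq> Arr C"

definition linked :: "('o, 'a) cat \<Rightarrow> 'a list \<Rightarrow> 'a list \<Rightarrow> bool" where
  "linked C X Y \<longleftrightarrow> arr_list C X \<and> arr_list C Y \<and> Cod C (last X) = Dom C (hd Y)"

definition glue :: "('o, 'a) cat \<Rightarrow> 'a list \<Rightarrow> 'a list \<Rightarrow> 'a list" where
  "glue C X Y = butlast X @ Comp C (last X) (hd Y) # tl Y"

fun gaps :: "('o, 'a) cat \<Rightarrow> 'a list \<Rightarrow> ('o \<times> 'o) list" where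
  "gaps C (x # y # ws) = (Cod C x, Dom C y) # gaps C (y # ws)"
| "gaps C _ = []"

lemma arr_list_nonempty: "arr_list C ws \<Longrightarrow> ws \<noteq> []"
  by (simp add: arr_list_def)

lemma arr_list_append_iff:
  "X \<noteq> [] \<Longrightarrow> Y \<noteq> [] \<Longrightarrow> arr_list C (X @ Y) \<longleftrightarrow> arr_list C X \<and> arr_list C Y"
  by (auto simp: arr_list_def)

lemma arr_list_hd_last: "arr_list C ws \<Longrightarrow> hd ws \<in> Arr C \<and> last ws \<in> Arr C"
  by (auto simp: arr_list_def)

lemma linkedD:
  "linked C X Y \<Longrightarrow> arr_list C X"
  "linked C X Y \<Longrightarrow> arr_list C Y"
  "linked C X Y \<Longrightarrow> X \<noteq> []"
  "linked C X Y \<Longrightarrow> Y \<noteq> []"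
  by (auto simp: linked_def arr_list_def)

lemma length_gaps [simp]: "length (gaps C ws) = length ws - 1"
  by (induction C ws rule: gaps.induct) auto

lemma nth_gaps: "k < length ws - 1 \<Longrightarrow> gaps C ws ! k = (Cod C (ws ! k), Dom C (ws ! Suc k))"
proof (induction C ws arbitrary: k rule: gaps.induct)
  case (1 C x y ws)
  then show ?case by (cases k) auto
qed auto

lemma gaps_Cons: "ws \<noteq> [] \<Longrightarrow> gaps C (x # ws) = (Cod C x, Dom C (hd ws)) # gaps C ws"
  by (cases ws) auto

lemma gaps_append:
  assumes "X \<noteq> []" "Y \<noteq> []"
  shows "gaps C (X @ Y) = gaps C X @ (Cod C (last X), Dom C (hd Y)) # gaps C Y"
  using assms by (induction X rule: list_nonempty_induct) (auto simp: gaps_Cons)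

lemma glue_nonempty [simp]: "glue C X Y \<noteq> []"
  by (simp add: glue_def)

lemma set_gaps_subset: "category C \<Longrightarrow> arr_list C ws \<Longrightarrow> set (gaps C ws) \<subseteq> Obj C \<times> Obj C"
  by (induction C ws rule: gaps.induct) (auto simp: arr_list_def category_Cod_in_Obj category_Dom_in_Obj)

lemma length_glue: "X \<noteq> [] \<Longrightarrow> Y \<noteq> [] \<Longrightarrow> length (glue C X Y) = length X + length Y - 1"
  by (cases Y) (auto simp: glue_def)

lemma glue_append_left: "Y \<noteq> [] \<Longrightarrow> glue C (X @ Y) Z = X @ glue C Y Z"
  by (simp add: glue_def butlast_append)

lemma glue_append_right: "Y \<noteq> [] \<Longrightarrow> glue C X (Y @ Z) = glue C X Y @ Z"
  by (cases Y) (auto simp: glue_def)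

lemma
  assumes "category C" "linked C X Y"
  shows arr_list_glue: "arr_list C (glue C X Y)"
    and Dom_hd_glue: "Dom C (hd (glue C X Y)) = Dom C (hd X)"
    and Cod_last_glue: "Cod C (last (glue C X Y)) = Cod C (last Y)"
proof -
  have X: "X \<noteq> []" "set X \<subseteq> Arr C" and Y: "Y \<noteq> []" "set Y \<subseteq> Arr C"
    and link: "Cod C (last X) = Dom C (hd Y)"
    using assms(2) by (auto simp: linked_def arr_list_def)
  then have arrs: "last X \<in> Arr C" "hd Y \<in> Arr C" by auto
  note comp = category_Comp_in_Arr[OF assms(1) arrs link]
    category_Dom_Comp[OF assms(1) arrs link] category_Cod_Comp[OF assms(1) arrs link]
  show "arr_list C (glue C X Y)"
    using X Y comp by (auto simp: arr_list_def glue_def dest: in_set_butlastD list.set_sel(2))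
  show "Dom C (hd (glue C X Y)) = Dom C (hd X)"
    using X comp by (cases X rule: rev_cases) (auto simp: glue_def hd_append)
  show "Cod C (last (glue C X Y)) = Cod C (last Y)"
    using Y comp by (cases Y) (auto simp: glue_def)
qed

lemma linked_glue_left: "category C \<Longrightarrow> linked C X Y \<Longrightarrow> linked C Y Z \<Longrightarrow> linked C (glue C X Y) Z"
  by (simp add: linked_def arr_list_glue Cod_last_glue)

lemma linked_glue_right: "category C \<Longrightarrow> linked C X Y \<Longrightarrow> linked C Y Z \<Longrightarrow> linked C X (glue C Y Z)"
  by (simp add: linked_def arr_list_glue Dom_hd_glue)

text \<open>Only a one-element middle list needs associativity of C; otherwise the two junctions are
  disjoint.\<close>
lemma glue_assoc:
  assumes "category C" "linked C X Y" "linked C Y Z"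
  shows "glue C (glue C X Y) Z = glue C X (glue C Y Z)"
proof (cases "tl Y = []")
  case True
  then obtain y where "Y = [y]"
    using linkedD(4)[OF assms(2)] by (cases Y) auto
  moreover have "last X \<in> Arr C" "hd Z \<in> Arr C"
    using assms(2,3) by (auto simp: linked_def arr_list_hd_last)
  ultimately show ?thesis
    using assms by (simp add: glue_def linked_def arr_list_def category_Comp_assoc)
next
  case False
  then obtain y Y' where "Y = y # Y'" "Y' \<noteq> []"
    by (cases Y) auto
  then show ?thesis by (simp add: glue_def butlast_append)
qed

lemma gaps_glue:
  assumes "category C" "linked C X Y"
  shows "gaps C (glue C X Y) = gaps C X @ gaps C Y"
  using linkedD(3)[OF assms(2)] assms(2)
proof (induction X rule: list_nonempty_induct)
  case (single x)
  then obtain y Y' where "Y = y # Y'" "x \<in> Arr C" "y \<in> Arr C" "Cod C x = Dom C y"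
    by (cases Y) (auto simp: linked_def arr_list_def)
  then show ?case
    using category_Cod_Comp[OF assms(1)] by (cases Y') (auto simp: glue_def)
next
  case (cons x X)
  then have "linked C X Y" by (auto simp: linked_def arr_list_def)
  moreover have "glue C (x # X) Y = x # glue C X Y"
    using glue_append_left[of X C "[x]"] cons(1) by simp
  ultimately show ?case
    using cons Dom_hd_glue[OF assms(1) \<open>linked C X Y\<close>] by (simp add: gaps_Cons)
qed

lemma glue_Idt_left: "category C \<Longrightarrow> arr_list C Y \<Longrightarrow> glue C [Idt C (Dom C (hd Y))] Y = Y"
  by (cases Y) (auto simp: glue_def arr_list_def category_Idt_Comp)

lemma glue_Idt_right: "category C \<Longrightarrow> arr_list C X \<Longrightarrow> glue C X [Idt C (Cod C (last X))] = X"
  by (cases X rule: rev_cases) (auto simp: glue_def arr_list_def category_Comp_Idt)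

section \<open>The operad of spliced arrows\<close>

lemma Ops_W [simp]: "ws \<in> Ops (W C) \<longleftrightarrow> arr_list C ws"
  by (auto simp: W_def arr_list_def)

lemma Ins_W [simp]: "Ins (W C) = gaps C"
  by (rule ext, rule nth_equalityI) (auto simp: W_def nth_gaps)

lemma Out_W [simp]: "Out (W C) ws = (Dom C (hd ws), Cod C (last ws))"
  by (simp add: W_def)

lemma Col_W [simp]: "Col (W C) = Obj C \<times> Obj C"
  by (simp add: W_def)

lemma OId_W [simp]: "OId (W C) (A, B) = [Idt C A, Idt C B]"
  by (simp add: W_def)

lemma OComp_W [simp]: "OComp (W C) = W_comp C"
  by (simp add: W_def)

lemma W_comp_append:
  assumes "length T = i" "T \<noteq> []" "D \<noteq> []" "h \<noteq> []"
  shows "W_comp C (T @ D) i h = glue C (glue C T h) D"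
proof -
  obtain T' t where T: "T = T' @ [t]"
    using assms(2) by (cases T rule: rev_cases) auto
  obtain d D' where D: "D = d # D'"
    using assms(3) by (cases D) auto
  have i: "i = Suc (length T')"
    using assms(1) T by simp
  show ?thesis
    using assms(4) unfolding W_comp_def glue_def T D i
    by (cases h rule: rev_cases) (auto simp: nth_append butlast_append)
qed

lemma arr_list_splitE:
  assumes "arr_list C g" "1 \<le> i" "i < length g"
  obtains T D where "g = T @ D" "length T = i" "arr_list C T" "arr_list C D"
  using assms by (intro that[of "take i g" "drop i g"])
    (auto simp: arr_list_def dest: in_set_takeD in_set_dropD)

lemma nth_gaps_append:
  "length T = i \<Longrightarrow> T \<noteq> [] \<Longrightarrow> D \<noteq> [] \<Longrightarrow>
    gaps C (T @ D) ! (i - 1) = (Cod C (last T), Dom C (hd D))"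
  by (simp add: gaps_append nth_append)

lemma composable_W_iff:
  "composable (W C) g i h \<longleftrightarrow> (\<exists>T D. g = T @ D \<and> length T = i \<and> linked C T h \<and> linked C h D)"
proof
  assume cp: "composable (W C) g i h"
  then have "arr_list C g" "1 \<le> i" "i < length g"
    by (auto simp: composable_def)
  then obtain T D where TD: "g = T @ D" "length T = i" "arr_list C T" "arr_list C D"
    by (rule arr_list_splitE)
  moreover have "gaps C g ! (i - 1) = (Cod C (last T), Dom C (hd D))"
    using TD(1) nth_gaps_append[OF TD(2) arr_list_nonempty[OF TD(3)] arr_list_nonempty[OF TD(4)]]
    by simp
  ultimately have "linked C T h \<and> linked C h D"
    using cp by (auto simp: composable_def linked_def)
  with TD show "\<exists>T D. g = T @ D \<and> length T = i \<and> linked C T h \<and> linked C h D"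
    by blast
next
  assume "\<exists>T D. g = T @ D \<and> length T = i \<and> linked C T h \<and> linked C h D"
  then obtain T D where g: "g = T @ D" "length T = i" and "linked C T h" "linked C h D"
    by blast
  moreover have "T \<noteq> []" "D \<noteq> []"
    using linkedD(3)[OF \<open>linked C T h\<close>] linkedD(4)[OF \<open>linked C h D\<close>] by auto
  moreover from calculation have "1 \<le> i" "i \<le> length g - 1"
    by (cases T; cases D; simp)+
  moreover have "gaps C g ! (i - 1) = (Cod C (last T), Dom C (hd D))"
    using g(1) nth_gaps_append[OF g(2) \<open>T \<noteq> []\<close> \<open>D \<noteq> []\<close>] by simp
  ultimately show "composable (W C) g i h"
    by (auto simp: composable_def linked_def arr_list_append_iff)
qed

lemma composable_WE:
  assumes "composable (W C) g i h"
  obtains T D where "g = T @ D" "length T = i" "linked C T h" "linked C h D"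
    and "W_comp C g i h = glue C (glue C T h) D"
  using assms W_comp_append linkedD unfolding composable_W_iff by metis

lemma
  assumes "category C" "composable (W C) g i h"
  shows arr_list_W_comp: "arr_list C (W_comp C g i h)"
    and Out_W_comp: "Out (W C) (W_comp C g i h) = Out (W C) g"
    and gaps_W_comp: "gaps C (W_comp C g i h) = take (i - 1) (gaps C g) @ gaps C h @ drop i (gaps C g)"
proof -
  obtain T D where g: "g = T @ D" "length T = i" and "linked C T h" "linked C h D"
    and comp: "W_comp C g i h = glue C (glue C T h) D"
    using assms(2) by (rule composable_WE)
  moreover have "linked C (glue C T h) D"
    using assms(1) \<open>linked C T h\<close> \<open>linked C h D\<close> by (rule linked_glue_left)
  moreover have "T \<noteq> []" "D \<noteq> []" "1 \<le> i"
    using linkedD(3)[OF \<open>linked C T h\<close>] linkedD(4)[OF \<open>linked C h D\<close>] g(2)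
    by (auto simp: Suc_le_eq)
  ultimately show "arr_list C (W_comp C g i h)" "Out (W C) (W_comp C g i h) = Out (W C) g"
      "gaps C (W_comp C g i h) = take (i - 1) (gaps C g) @ gaps C h @ drop i (gaps C g)"
    using assms(1)
    by (simp_all add: arr_list_glue Dom_hd_glue Cod_last_glue gaps_glue gaps_append)
qed

lemma W_comp_OId_left:
  assumes "category C" "arr_list C g"
  shows "W_comp C [Idt C (Dom C (hd g)), Idt C (Cod C (last g))] 1 g = g"
  using W_comp_append[of "[_]" 1 "[_]" g C] assms
  by (simp add: arr_list_nonempty glue_Idt_left glue_Idt_right)

lemma W_comp_OId_right:
  assumes "category C" "arr_list C T" "arr_list C D"
  shows "W_comp C (T @ D) (length T) [Idt C (Cod C (last T)), Idt C (Dom C (hd D))] = T @ D"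
proof -
  have "W_comp C (T @ D) (length T) [Idt C (Cod C (last T)), Idt C (Dom C (hd D))]
      = glue C (glue C T ([Idt C (Cod C (last T))] @ [Idt C (Dom C (hd D))])) D"
    using assms by (simp add: W_comp_append arr_list_nonempty)
  also have "\<dots> = glue C (glue C T [Idt C (Cod C (last T))] @ [Idt C (Dom C (hd D))]) D"
    by (rule arg_cong[where f = "\<lambda>X. glue C X D"], rule glue_append_right) simp
  also have "\<dots> = T @ D"
    using assms by (simp add: glue_Idt_right glue_append_left glue_Idt_left)
  finally show ?thesis .
qed

lemma W_comp_assoc_seq:
  assumes C: "category C" and "composable (W C) f i g" "composable (W C) g j h"
  shows "W_comp C (W_comp C f i g) (i - 1 + j) h = W_comp C f i (W_comp C g j h)"
proof -
  obtain T D where f: "f = T @ D" "length T = i" and "linked C T g" "linked C g D"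
    and fg: "W_comp C f i g = glue C (glue C T g) D"
    using assms(2) by (rule composable_WE)
  obtain G1 G2 where g: "g = G1 @ G2" "length G1 = j" and "linked C G1 h" "linked C h G2"
    and gh: "W_comp C g j h = glue C (glue C G1 h) G2"
    using assms(3) by (rule composable_WE)
  have ne: "T \<noteq> []" "D \<noteq> []" "G1 \<noteq> []" "G2 \<noteq> []" "h \<noteq> []"
    using \<open>linked C T g\<close> \<open>linked C g D\<close> \<open>linked C G1 h\<close> \<open>linked C h G2\<close> linkedD by blast+
  have "linked C T G1" "linked C G2 D"
    using \<open>linked C T g\<close> \<open>linked C g D\<close> \<open>linked C G1 h\<close> \<open>linked C h G2\<close> g ne
    by (auto simp: linked_def arr_list_append_iff)
  have "W_comp C f i g = glue C T G1 @ glue C G2 D"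
    using fg g ne by (simp add: glue_append_left glue_append_right)
  moreover have "length (glue C T G1) = i - 1 + j"
    using f(2) g(2) ne by (cases T) (simp_all add: length_glue)
  ultimately have "W_comp C (W_comp C f i g) (i - 1 + j) h
      = glue C (glue C (glue C T G1) h) (glue C G2 D)"
    using ne by (simp add: W_comp_append)
  also have "\<dots> = glue C (glue C T (glue C (glue C G1 h) G2)) D"
    using C \<open>linked C T G1\<close> \<open>linked C G2 D\<close> \<open>linked C G1 h\<close> \<open>linked C h G2\<close>
    by (simp add: glue_assoc linked_glue_left linked_glue_right)
  also have "\<dots> = W_comp C f i (W_comp C g j h)"
    using gh f ne by (simp add: W_comp_append)
  finally show ?thesis .
qed

lemma W_comp_assoc_par:
  assumes C: "category C" and "composable (W C) f i g" "composable (W C) f k h" "i < k"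
  shows "W_comp C (W_comp C f i g) (k - 1 + (length g - 1)) h = W_comp C (W_comp C f k h) i g"
proof -
  obtain T D' where f: "f = T @ D'" "length T = i" and "linked C T g" "linked C g D'"
    and fg: "W_comp C f i g = glue C (glue C T g) D'"
    using assms(2) by (rule composable_WE)
  obtain TM D where f': "f = TM @ D" "length TM = k" and "linked C TM h" "linked C h D"
    and fh: "W_comp C f k h = glue C (glue C TM h) D"
    using assms(3) by (rule composable_WE)
  obtain M where M: "TM = T @ M" "D' = M @ D"
    using f f' \<open>i < k\<close> by (auto simp: append_eq_append_conv2)
  have ne: "T \<noteq> []" "M \<noteq> []" "D \<noteq> []" "g \<noteq> []" "h \<noteq> []"
    using \<open>linked C T g\<close> \<open>linked C h D\<close> M f f' \<open>i < k\<close> by (auto dest: linkedD(3,4))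
  have "linked C g M" "linked C M h"
    using \<open>linked C T g\<close> \<open>linked C g D'\<close> \<open>linked C TM h\<close> \<open>linked C h D\<close> M ne
    by (auto simp: linked_def arr_list_append_iff)
  have "W_comp C f i g = glue C (glue C T g) M @ D"
    using fg M ne by (simp add: glue_append_right)
  moreover have "length (glue C (glue C T g) M) = k - 1 + (length g - 1)"
    using f(2) f'(2) M ne by (cases g; cases M) (auto simp: length_glue)
  ultimately have "W_comp C (W_comp C f i g) (k - 1 + (length g - 1)) h
      = glue C (glue C (glue C (glue C T g) M) h) D"
    using ne by (simp add: W_comp_append)
  also have "\<dots> = glue C (glue C T g) (glue C (glue C M h) D)"
    using C \<open>linked C T g\<close> \<open>linked C g M\<close> \<open>linked C M h\<close> \<open>linked C h D\<close>
    by (simp add: glue_assoc linked_glue_left linked_glue_right)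
  also have "\<dots> = W_comp C (T @ glue C (glue C M h) D) i g"
    using f(2) ne by (simp add: W_comp_append)
  also have "T @ glue C (glue C M h) D = W_comp C f k h"
    using fh M ne by (simp add: glue_append_left)
  finally show ?thesis .
qed

lemma is_operad_W:
  assumes C: "category C"
  shows "is_operad (W C)"
  unfolding is_operad_def
proof (intro conjI allI impI ballI)
  fix g
  assume "g \<in> Ops (W C)"
  then have g: "arr_list C g" by simp
  then show "set (Ins (W C) g) \<subseteq> Col (W C)"
    using C by (simp add: set_gaps_subset)
  show "Out (W C) g \<in> Col (W C)"
    using C g by (simp add: arr_list_hd_last category_Dom_in_Obj category_Cod_in_Obj)
  show "OComp (W C) (OId (W C) (Out (W C) g)) 1 g = g"
    using W_comp_OId_left[OF C g] by simp
next
  fix c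
  assume "c \<in> Col (W C)"
  then obtain A B where "c = (A, B)" "A \<in> Obj C" "B \<in> Obj C" by auto
  then show "OId (W C) c \<in> Ops (W C)" "Ins (W C) (OId (W C) c) = [c]" "Out (W C) (OId (W C) c) = c"
    using C by (simp_all add: arr_list_def category_Idt_in_Arr category_Dom_Idt category_Cod_Idt)
next
  fix g h i
  assume "composable (W C) g i h"
  then show "OComp (W C) g i h \<in> Ops (W C)"
    "Ins (W C) (OComp (W C) g i h) = take (i - 1) (Ins (W C) g) @ Ins (W C) h @ drop i (Ins (W C) g)"
    "Out (W C) (OComp (W C) g i h) = Out (W C) g"
    using C by (simp_all only: OComp_W Ops_W Ins_W arr_list_W_comp gaps_W_comp Out_W_comp)
next
  fix g i
  assume "g \<in> Ops (W C)" "1 \<le> i \<and> i \<le> arity (W C) g"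
  then have "arr_list C g" "1 \<le> i" "i < length g"
    by auto
  then obtain T D where TD: "g = T @ D" "length T = i" "arr_list C T" "arr_list C D"
    by (rule arr_list_splitE)
  then have "Ins (W C) g ! (i - 1) = (Cod C (last T), Dom C (hd D))"
    using nth_gaps_append[OF TD(2) arr_list_nonempty arr_list_nonempty] by simp
  then show "OComp (W C) g i (OId (W C) (Ins (W C) g ! (i - 1))) = g"
    using W_comp_OId_right[OF C TD(3,4)] TD(1,2) by simp
next
  fix f g h i j
  assume "composable (W C) f i g" "composable (W C) g j h"
  then show "OComp (W C) (OComp (W C) f i g) (i - 1 + j) h = OComp (W C) f i (OComp (W C) g j h)"
    unfolding OComp_W by (rule W_comp_assoc_seq[OF C])
next
  fix f g h i k
  assume "composable (W C) f i g" "composable (W C) f k h" "i < k"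
  then show "OComp (W C) (OComp (W C) f i g) (k - 1 + arity (W C) g) h
      = OComp (W C) (OComp (W C) f k h) i g"
    unfolding OComp_W Ins_W length_gaps by (rule W_comp_assoc_par[OF C])
qed

section \<open>The functor of spliced arrows\<close>

lemma arr_list_map: "cat_functor Q C po pa \<Longrightarrow> arr_list Q X \<Longrightarrow> arr_list C (map pa X)"
  by (auto simp: arr_list_def cat_functor_Arr)

lemma map_glue:
  assumes "cat_functor Q C po pa" "linked Q X Y"
  shows "map pa (glue Q X Y) = glue C (map pa X) (map pa Y)"
  using assms
  by (auto simp: glue_def linked_def arr_list_nonempty arr_list_hd_last cat_functor_Comp
      map_butlast last_map hd_map map_tl)

lemma gaps_map:
  "cat_functor Q C po pa \<Longrightarrow> set X \<subseteq> Arr Q \<Longrightarrow> gaps C (map pa X) = map (map_prod po po) (gaps Q X)"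
  by (induction Q X rule: gaps.induct) (auto simp: cat_functor_Dom cat_functor_Cod)

lemma map_W_comp:
  assumes F: "cat_functor Q C po pa" and "composable (W Q) g i h"
  shows "map pa (W_comp Q g i h) = W_comp C (map pa g) i (map pa h)"
proof -
  obtain T D where g: "g = T @ D" "length T = i" and "linked Q T h" "linked Q h D"
    and gh: "W_comp Q g i h = glue Q (glue Q T h) D"
    using assms(2) by (rule composable_WE)
  moreover have "linked Q (glue Q T h) D"
    using cat_functor_dom_category[OF F] calculation by (blast intro: linked_glue_left)
  ultimately show ?thesis
    using F by (simp add: map_glue W_comp_append linkedD(3,4))
qed

lemma operad_functor_W:
  assumes F: "cat_functor Q C po pa"
  shows "operad_functor (W Q) (W C) (W_col_map po) (W_op_map pa)"
  unfolding operad_functor_def W_col_map_def W_op_map_def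
proof (intro conjI ballI allI impI)
  show "is_operad (W Q)" "is_operad (W C)"
    using F by (simp_all add: is_operad_W cat_functor_dom_category cat_functor_cod_category)
next
  fix c
  assume "c \<in> Col (W Q)"
  then show "map_prod po po c \<in> Col (W C)" "map pa (OId (W Q) c) = OId (W C) (map_prod po po c)"
    using F by (auto simp: cat_functor_Obj cat_functor_Idt)
next
  fix g
  assume "g \<in> Ops (W Q)"
  then have g: "arr_list Q g" by simp
  then show "map pa g \<in> Ops (W C)"
    using F by (simp add: arr_list_map)
  show "Ins (W C) (map pa g) = map (map_prod po po) (Ins (W Q) g)"
    using F g by (simp add: gaps_map arr_list_def)
  show "Out (W C) (map pa g) = map_prod po po (Out (W Q) g)"
    using F g by (simp add: hd_map last_map arr_list_nonempty arr_list_hd_last cat_functor_Dom cat_functor_Cod)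
next
  fix g h i
  assume "composable (W Q) g i h"
  then show "map pa (OComp (W Q) g i h) = OComp (W C) (map pa g) i (map pa h)"
    using F by (simp add: map_W_comp)
qed

section \<open>Unique lifting\<close>

lemma cat_ulf_lift:
  assumes "cat_ulf Q C po pa" "\<alpha> \<in> Arr Q" "u \<in> Arr C" "v \<in> Arr C" "Cod C u = Dom C v"
    and "pa \<alpha> = Comp C u v"
  obtains \<beta> \<gamma> where "\<beta> \<in> Arr Q" "\<gamma> \<in> Arr Q" "Cod Q \<beta> = Dom Q \<gamma>" "\<alpha> = Comp Q \<beta> \<gamma>"
    and "pa \<beta> = u" "pa \<gamma> = v"
  using assms unfolding cat_ulf_def by blast

lemma cat_ulf_unique:
  assumes F: "cat_functor Q C po pa" and U: "cat_ulf Q C po pa"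
    and "\<beta> \<in> Arr Q" "\<gamma> \<in> Arr Q" "\<beta>' \<in> Arr Q" "\<gamma>' \<in> Arr Q"
    and "Cod Q \<beta> = Dom Q \<gamma>" "Cod Q \<beta>' = Dom Q \<gamma>'" "Comp Q \<beta> \<gamma> = Comp Q \<beta>' \<gamma>'"
    and "pa \<beta> = pa \<beta>'" "pa \<gamma> = pa \<gamma>'"
  shows "\<beta> = \<beta>' \<and> \<gamma> = \<gamma>'"
proof -
  have "Comp Q \<beta> \<gamma> \<in> Arr Q"
    using cat_functor_dom_category[OF F] assms(3,4,7) by (rule category_Comp_in_Arr)
  moreover have "pa \<beta> \<in> Arr C" "pa \<gamma> \<in> Arr C" "Cod C (pa \<beta>) = Dom C (pa \<gamma>)"
    using F assms(3,4,7) by (simp_all add: cat_functor_Arr cat_functor_Dom cat_functor_Cod)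
  moreover have "pa (Comp Q \<beta> \<gamma>) = Comp C (pa \<beta>) (pa \<gamma>)"
    using F assms(3,4,7) by (rule cat_functor_Comp)
  ultimately have "\<exists>!(\<beta>', \<gamma>'). \<beta>' \<in> Arr Q \<and> \<gamma>' \<in> Arr Q \<and> Cod Q \<beta>' = Dom Q \<gamma>' \<and>
      Comp Q \<beta> \<gamma> = Comp Q \<beta>' \<gamma>' \<and> pa \<beta>' = pa \<beta> \<and> pa \<gamma>' = pa \<gamma>"
    by (rule U[unfolded cat_ulf_def, rule_format])
  then show ?thesis
    using assms(3-11) by (metis (mono_tags, lifting) case_prodI prod.inject ex1E)
qed

lemma glue_lift:
  assumes U: "cat_ulf Q C po pa" and "arr_list Q \<alpha>" "linked C X Y" "map pa \<alpha> = glue C X Y"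
  obtains X' Y' where "linked Q X' Y'" "\<alpha> = glue Q X' Y'" "map pa X' = X" "map pa Y' = Y"
proof -
  have "map pa \<alpha> = butlast X @ Comp C (last X) (hd Y) # tl Y"
    using assms(4) by (simp add: glue_def)
  then obtain A a B where \<alpha>: "\<alpha> = A @ a # B" and "map pa A = butlast X"
    and a: "pa a = Comp C (last X) (hd Y)" and "map pa B = tl Y"
    by (auto simp: map_eq_append_conv map_eq_Cons_conv)
  have arrs: "set A \<subseteq> Arr Q" "a \<in> Arr Q" "set B \<subseteq> Arr Q"
    using assms(2) \<alpha> by (auto simp: arr_list_def)
  obtain \<beta> \<gamma> where "\<beta> \<in> Arr Q" "\<gamma> \<in> Arr Q" "Cod Q \<beta> = Dom Q \<gamma>" "a = Comp Q \<beta> \<gamma>"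
    and "pa \<beta> = last X" "pa \<gamma> = hd Y"
    using cat_ulf_lift[OF U arrs(2) _ _ _ a] assms(3) by (auto simp: linked_def arr_list_hd_last)
  then show ?thesis
    using that[of "A @ [\<beta>]" "\<gamma> # B"] arrs \<alpha> \<open>map pa A = butlast X\<close> \<open>map pa B = tl Y\<close>
      linkedD(3,4)[OF assms(3)]
    by (simp add: linked_def arr_list_def glue_def)
qed

lemma glue_lift_unique:
  assumes F: "cat_functor Q C po pa" and U: "cat_ulf Q C po pa"
    and "linked Q X Y" "linked Q X' Y'" "glue Q X Y = glue Q X' Y'"
    and "map pa X = map pa X'" "map pa Y = map pa Y'"
  shows "X = X' \<and> Y = Y'"
proof -
  obtain A x A' x' where X: "X = A @ [x]" "X' = A' @ [x']"
    using linkedD(3)[OF assms(3)] linkedD(3)[OF assms(4)]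
    by (metis append_butlast_last_id)
  obtain y B y' B' where Y: "Y = y # B" "Y' = y' # B'"
    using linkedD(4)[OF assms(3)] linkedD(4)[OF assms(4)]
    by (metis list.exhaust)
  have "length A = length A'"
    using arg_cong[OF assms(6), of length] X by simp
  then have eqs: "A = A'" "Comp Q x y = Comp Q x' y'" "B = B'"
    using assms(5) X Y by (simp_all add: glue_def)
  have arrs: "x \<in> Arr Q" "y \<in> Arr Q" "x' \<in> Arr Q" "y' \<in> Arr Q"
    "Cod Q x = Dom Q y" "Cod Q x' = Dom Q y'"
    using assms(3,4) X Y by (auto simp: linked_def arr_list_def)
  have "pa x = pa x'" "pa y = pa y'"
    using assms(6,7) X Y by auto
  with cat_ulf_unique[OF F U arrs eqs(2)] show ?thesis
    using X Y eqs by simp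
qed

lemma W_comp_lift:
  assumes F: "cat_functor Q C po pa" and U: "cat_ulf Q C po pa"
    and "arr_list Q \<alpha>" "composable (W C) g i h" "map pa \<alpha> = W_comp C g i h"
  obtains \<beta> \<gamma> where "composable (W Q) \<beta> i \<gamma>" "\<alpha> = W_comp Q \<beta> i \<gamma>" "map pa \<beta> = g" "map pa \<gamma> = h"
proof -
  obtain T D where g: "g = T @ D" "length T = i" and "linked C T h" "linked C h D"
    and gh: "W_comp C g i h = glue C (glue C T h) D"
    using assms(4) by (rule composable_WE)
  have "linked C (glue C T h) D"
    using cat_functor_cod_category[OF F] \<open>linked C T h\<close> \<open>linked C h D\<close> by (rule linked_glue_left)
  then obtain P D' where "linked Q P D'" "\<alpha> = glue Q P D'" "map pa P = glue C T h" "map pa D' = D"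
    using glue_lift[OF U assms(3)] assms(5) gh by metis
  moreover obtain T' G where "linked Q T' G" "P = glue Q T' G" "map pa T' = T" "map pa G = h"
    using glue_lift[OF U _ \<open>linked C T h\<close>] calculation linkedD(1) by metis
  moreover have "linked Q G D'"
    using calculation Cod_last_glue[OF cat_functor_dom_category[OF F]] by (auto simp: linked_def)
  moreover have "length T' = i"
    using g(2) \<open>map pa T' = T\<close> by auto
  ultimately have "composable (W Q) (T' @ D') i G" "\<alpha> = W_comp Q (T' @ D') i G"
      "map pa (T' @ D') = g"
    using g(1) by (auto simp: composable_W_iff W_comp_append linkedD(3,4))
  with \<open>map pa G = h\<close> show ?thesis
    using that by blast
qed

lemma W_comp_lift_unique:
  assumes F: "cat_functor Q C po pa" and U: "cat_ulf Q C po pa"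
    and "composable (W Q) \<beta> i \<gamma>" "composable (W Q) \<beta>' i \<gamma>'"
    and "W_comp Q \<beta> i \<gamma> = W_comp Q \<beta>' i \<gamma>'" "map pa \<beta> = map pa \<beta>'" "map pa \<gamma> = map pa \<gamma>'"
  shows "\<beta> = \<beta>' \<and> \<gamma> = \<gamma>'"
proof -
  have Q: "category Q"
    using F by (rule cat_functor_dom_category)
  obtain T D where \<beta>: "\<beta> = T @ D" "length T = i" and "linked Q T \<gamma>" "linked Q \<gamma> D"
    and \<beta>\<gamma>: "W_comp Q \<beta> i \<gamma> = glue Q (glue Q T \<gamma>) D"
    using assms(3) by (rule composable_WE)
  obtain T' D' where \<beta>': "\<beta>' = T' @ D'" "length T' = i" and "linked Q T' \<gamma>'" "linked Q \<gamma>' D'"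
    and \<beta>\<gamma>': "W_comp Q \<beta>' i \<gamma>' = glue Q (glue Q T' \<gamma>') D'"
    using assms(4) by (rule composable_WE)
  have "map pa T = map pa T'" "map pa D = map pa D'"
    using assms(6) \<beta> \<beta>' by simp_all
  have "glue Q T \<gamma> = glue Q T' \<gamma>' \<and> D = D'"
  proof (rule glue_lift_unique[OF F U])
    show "linked Q (glue Q T \<gamma>) D" "linked Q (glue Q T' \<gamma>') D'"
      using Q \<open>linked Q T \<gamma>\<close> \<open>linked Q \<gamma> D\<close> \<open>linked Q T' \<gamma>'\<close> \<open>linked Q \<gamma>' D'\<close>
      by (simp_all add: linked_glue_left)
    show "glue Q (glue Q T \<gamma>) D = glue Q (glue Q T' \<gamma>') D'"
      using assms(5) \<beta>\<gamma> \<beta>\<gamma>' by simp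
    show "map pa (glue Q T \<gamma>) = map pa (glue Q T' \<gamma>')"
      using F \<open>linked Q T \<gamma>\<close> \<open>linked Q T' \<gamma>'\<close> \<open>map pa T = map pa T'\<close> assms(7)
      by (simp add: map_glue)
  qed fact
  moreover have "T = T' \<and> \<gamma> = \<gamma>'"
    using \<open>linked Q T \<gamma>\<close> \<open>linked Q T' \<gamma>'\<close> calculation[THEN conjunct1] \<open>map pa T = map pa T'\<close> assms(7)
    by (rule glue_lift_unique[OF F U])
  ultimately show ?thesis
    using \<beta> \<beta>' by simp
qed

lemma operad_ulf_W:
  assumes F: "cat_functor Q C po pa" and U: "cat_ulf Q C po pa"
  shows "operad_ulf (W Q) (W C) (W_col_map po) (W_op_map pa)"
  unfolding operad_ulf_def W_op_map_def
proof (intro ballI allI impI)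
  fix \<alpha> g h i
  assume "\<alpha> \<in> Ops (W Q)" "composable (W C) g i h" "map pa \<alpha> = OComp (W C) g i h"
  then obtain \<beta> \<gamma> where lift: "composable (W Q) \<beta> i \<gamma>" "\<alpha> = W_comp Q \<beta> i \<gamma>"
      "map pa \<beta> = g" "map pa \<gamma> = h"
    by (auto elim: W_comp_lift[OF F U])
  show "\<exists>!(\<beta>, \<gamma>). composable (W Q) \<beta> i \<gamma> \<and> \<alpha> = OComp (W Q) \<beta> i \<gamma> \<and> map pa \<beta> = g \<and> map pa \<gamma> = h"
  proof (rule ex1I[of _ "(\<beta>, \<gamma>)"])
    fix p
    assume "case p of (\<beta>', \<gamma>') \<Rightarrow>
      composable (W Q) \<beta>' i \<gamma>' \<and> \<alpha> = OComp (W Q) \<beta>' i \<gamma>' \<and> map pa \<beta>' = g \<and> map pa \<gamma>' = h"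
    moreover obtain \<beta>' \<gamma>' where p: "p = (\<beta>', \<gamma>')"
      by (cases p)
    ultimately have "composable (W Q) \<beta>' i \<gamma>'" "W_comp Q \<beta>' i \<gamma>' = W_comp Q \<beta> i \<gamma>"
      "map pa \<beta>' = map pa \<beta>" "map pa \<gamma>' = map pa \<gamma>"
      using lift by simp_all
    then show "p = (\<beta>, \<gamma>)"
      using W_comp_lift_unique[OF F U _ lift(1)] p by simp
  qed (use lift in simp)
qed

section \<open>Finite fibres and constants\<close>

lemma operad_finitary_W:
  assumes "cat_finitary Q C po pa"
  shows "operad_finitary (W Q) (W C) (W_col_map po) (W_op_map pa)"
  unfolding operad_finitary_def W_col_map_def W_op_map_def
proof (intro conjI ballI)
  fix c
  assume "c \<in> Col (W C)"
  then obtain A B where c: "c = (A, B)" "A \<in> Obj C" "B \<in> Obj C"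
    by auto
  then have "{q \<in> Col (W Q). map_prod po po q = c} = {a \<in> Obj Q. po a = A} \<times> {b \<in> Obj Q. po b = B}"
    by auto
  with assms c show "finite {q \<in> Col (W Q). map_prod po po q = c}"
    by (simp add: cat_finitary_def)
next
  fix g
  assume g: "g \<in> Ops (W C)"
  define S where "S = (\<Union>x\<in>set g. {a \<in> Arr Q. pa a = x})"
  have "finite S"
    using assms g by (auto simp: S_def cat_finitary_def arr_list_def)
  have "{\<alpha> \<in> Ops (W Q). map pa \<alpha> = g} \<subseteq> {xs. set xs \<subseteq> S \<and> length xs = length g}"
    by (auto simp: S_def arr_list_def)
  then show "finite {\<alpha> \<in> Ops (W Q). map pa \<alpha> = g}"
    using finite_lists_length_eq[OF \<open>finite S\<close>] by (rule finite_subset)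
qed

lemma gaps_eq_Nil_iff: "gaps C ws = [] \<longleftrightarrow> length ws \<le> 1"
  by (induction C ws rule: gaps.induct) auto

lemma constants_W:
  "{\<alpha> \<in> Ops (W Q). Ins (W Q) \<alpha> = [] \<and> Out (W Q) \<alpha> = (q0, qf)} = (\<lambda>a. [a]) ` Hom Q q0 qf"
  by (auto simp: Hom_def arr_list_def gaps_eq_Nil_iff le_Suc_eq length_Suc_conv)

theorem mainTheorem6:
  fixes C :: "('o, 'a) cat" and Q :: "('s, 'b) cat"
    and po :: "'s \<Rightarrow> 'o" and pa :: "'b \<Rightarrow> 'a" and q0 qf :: 's
  assumes "nfa_cat C Q po pa q0 qf"
  shows "nfa_op (W C) (W Q) (W_col_map po) (W_op_map pa) (q0, qf)
    \<and> nfa_op_lang (W C) (W Q) (W_col_map po) (W_op_map pa) (q0, qf)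
        = (\<lambda>f. [f]) ` nfa_cat_lang C Q po pa q0 qf"
proof
  have "cat_functor Q C po pa" "cat_ulf Q C po pa" "cat_finitary Q C po pa"
    and "q0 \<in> Obj Q" "qf \<in> Obj Q"
    using assms by (simp_all add: nfa_cat_def)
  then show "nfa_op (W C) (W Q) (W_col_map po) (W_op_map pa) (q0, qf)"
    by (simp add: nfa_op_def operad_functor_W operad_ulf_W operad_finitary_W)
  show "nfa_op_lang (W C) (W Q) (W_col_map po) (W_op_map pa) (q0, qf)
      = (\<lambda>f. [f]) ` nfa_cat_lang C Q po pa q0 qf"
    unfolding nfa_op_lang_def nfa_cat_lang_def constants_W W_op_map_def image_image by simp
qed

end
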